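(* Let $\Sigma=\{s_1<s_2<\cdots<s_l\}$ be a set of positive integers with $s_1=1$ and $s_i-s_{i-1}\le 2$ for all $i=2,\ldots,l$. Then $\Sigma$ is a $\delta$-set. Furthermore, there is a caterpillar of order $2l$ that admits a distance $\Sigma$-labeling in which every element of $\Sigma$ is the label of exactly two vertices.
   Context: All graphs are finite and simple; $d(u,v)$ denotes the usual graph distance. For a set $J$ of nonnegative integers, a distance $J$-labeling of $G$ is a function $f:V(G)\to J$ with $f(V(G))=J$ such that whenever two distinct vertices $u,v$ satisfy $f(u)=f(v)=k$, we have $d(u,v)=k$. It is proper if every $k\in J\setminus\{0\}$ is the label of at least two vertices. A finite set $\Sigma$ of nonnegative integers is a $\delta$-set if there exists a graph admitting a proper distance $\Sigma$-labeling. A caterpillar is a tree in which the vertices that are not leaves induce a path (possibly empty). *)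

theory Defs
  imports Main "HOL-Library.Extended_Nat"
begin

definition simple_graph :: "'a set \<Rightarrow> ('a \<Rightarrow> 'a \<Rightarrow> bool) \<Rightarrow> bool" where
  "simple_graph V E \<longleftrightarrow> finite V \<and> (\<forall>x y. E x y \<longrightarrow> x \<in> V \<and> y \<in> V)
     \<and> (\<forall>x y. E x y \<longrightarrow> E y x) \<and> (\<forall>x. \<not> E x x)"

definition walk :: "'a set \<Rightarrow> ('a \<Rightarrow> 'a \<Rightarrow> bool) \<Rightarrow> 'a list \<Rightarrow> bool" where
  "walk V E xs \<longleftrightarrow> xs \<noteq> [] \<and> set xs \<subseteq> V \<and> (\<forall>i. Suc i < length xs \<longrightarrow> E (xs ! i) (xs ! Suc i))"

definition gdist :: "'a set \<Rightarrow> ('a \<Rightarrow> 'a \<Rightarrow> bool) \<Rightarrow> 'a \<Rightarrow> 'a \<Rightarrow> enat" where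
  "gdist V E u v =
     (if \<exists>xs. walk V E xs \<and> hd xs = u \<and> last xs = v
      then enat (LEAST n. \<exists>xs. walk V E xs \<and> hd xs = u \<and> last xs = v \<and> length xs = Suc n)
      else \<infinity>)"

definition distance_labeling :: "'a set \<Rightarrow> ('a \<Rightarrow> 'a \<Rightarrow> bool) \<Rightarrow> nat set \<Rightarrow> ('a \<Rightarrow> nat) \<Rightarrow> bool" where
  "distance_labeling V E J f \<longleftrightarrow> f ` V = J \<and>
     (\<forall>u\<in>V. \<forall>v\<in>V. u \<noteq> v \<and> f u = f v \<longrightarrow> gdist V E u v = enat (f u))"

definition proper_distance_labeling :: "'a set \<Rightarrow> ('a \<Rightarrow> 'a \<Rightarrow> bool) \<Rightarrow> nat set \<Rightarrow> ('a \<Rightarrow> nat) \<Rightarrow> bool" where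
  "proper_distance_labeling V E J f \<longleftrightarrow> distance_labeling V E J f \<and>
     (\<forall>k\<in>J - {0}. \<exists>u\<in>V. \<exists>v\<in>V. u \<noteq> v \<and> f u = k \<and> f v = k)"

text \<open>Delta-set: finite set admitting a proper distance labeling of some finite simple graph
  (vertices taken w.l.o.g. as natural numbers).\<close>
definition delta_set :: "nat set \<Rightarrow> bool" where
  "delta_set S \<longleftrightarrow> finite S \<and>
     (\<exists>(V::nat set) E f. simple_graph V E \<and> proper_distance_labeling V E S f)"

definition connected_graph :: "'a set \<Rightarrow> ('a \<Rightarrow> 'a \<Rightarrow> bool) \<Rightarrow> bool" where
  "connected_graph V E \<longleftrightarrow> V \<noteq> {} \<and> (\<forall>u\<in>V. \<forall>v\<in>V. \<exists>xs. walk V E xs \<and> hd xs = u \<and> last xs = v)"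

definition is_cycle :: "'a set \<Rightarrow> ('a \<Rightarrow> 'a \<Rightarrow> bool) \<Rightarrow> 'a list \<Rightarrow> bool" where
  "is_cycle V E xs \<longleftrightarrow> length xs \<ge> 3 \<and> distinct xs \<and> walk V E xs \<and> E (last xs) (hd xs)"

definition is_tree :: "'a set \<Rightarrow> ('a \<Rightarrow> 'a \<Rightarrow> bool) \<Rightarrow> bool" where
  "is_tree V E \<longleftrightarrow> simple_graph V E \<and> connected_graph V E \<and> (\<nexists>xs. is_cycle V E xs)"

definition degree :: "('a \<Rightarrow> 'a \<Rightarrow> bool) \<Rightarrow> 'a \<Rightarrow> nat" where
  "degree E v = card {w. E v w}"

text \<open>The subgraph induced by N is a path (possibly empty): N can be listed without
  repetition so that two vertices of N are adjacent iff they are consecutive.\<close>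
definition induces_path :: "('a \<Rightarrow> 'a \<Rightarrow> bool) \<Rightarrow> 'a set \<Rightarrow> bool" where
  "induces_path E N \<longleftrightarrow> (\<exists>xs. distinct xs \<and> set xs = N \<and>
     (\<forall>i<length xs. \<forall>j<length xs. E (xs ! i) (xs ! j) \<longleftrightarrow> (i = Suc j \<or> j = Suc i)))"

definition caterpillar :: "'a set \<Rightarrow> ('a \<Rightarrow> 'a \<Rightarrow> bool) \<Rightarrow> bool" where
  "caterpillar V E \<longleftrightarrow> is_tree V E \<and> induces_path E {v\<in>V. degree E v \<noteq> 1}"

end

theory Submission
  imports Defs
begin

text \<open>Put the first copies of the labels on a path \<open>0, 1, \<dots>, l - 1\<close>, the vertex at position
  \<open>i\<close> carrying \<open>s (i + 1)\<close>, and extend the path to the left. The second copy of \<open>s (i + 1)\<close>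
  must be at distance \<open>s (i + 1)\<close>: it is a leaf hanging below position \<open>i + 1 - s (i + 1)\<close>, or,
  when the next label jumps by two, a path vertex at position \<open>i - s (i + 1)\<close>. The hypothesis
  \<open>s (i + 1) - s i \<le> 2\<close> makes the excess \<open>s (i + 1) - (i + 1)\<close> grow by at most one per step,
  and it grows exactly at the jumps, so the path vertices of the second kind fill every position
  between \<open>l - s l\<close> and \<open>-1\<close> exactly once. In the resulting caterpillar the distance is the
  horizontal distance plus the number of leaves involved, which gives the labelling.\<close>

lemma walk_singleton: "x \<in> V \<Longrightarrow> walk V E [x]"
  by (simp add: walk_def)

lemma walk_append:
  assumes "walk V E xs" "walk V E ys" "E (last xs) (hd ys)"
  shows "walk V E (xs @ ys)"
  unfolding walk_def
proof (intro conjI allI impI)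
  show "xs @ ys \<noteq> []" "set (xs @ ys) \<subseteq> V" using assms by (auto simp: walk_def)
next
  fix i assume i: "Suc i < length (xs @ ys)"
  have ne: "xs \<noteq> []" "ys \<noteq> []" using assms by (auto simp: walk_def)
  consider "Suc i < length xs" | "Suc i = length xs" | "length xs \<le> i" by linarith
  then show "E ((xs @ ys) ! i) ((xs @ ys) ! Suc i)"
  proof cases
    case 1
    then show ?thesis using assms(1) by (simp add: nth_append walk_def)
  next
    case 2
    then have "i = length xs - 1" by simp
    then show ?thesis using assms(3) ne by (simp add: nth_append last_conv_nth hd_conv_nth)
  next
    case 3
    then show ?thesis using assms(2) i by (auto simp: nth_append walk_def Suc_diff_le)
  qed
qed

lemma walk_rev:
  assumes "walk V E xs" "\<And>x y. E x y \<Longrightarrow> E y x"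
  shows "walk V E (rev xs)"
  unfolding walk_def
proof (intro conjI allI impI)
  show "rev xs \<noteq> []" "set (rev xs) \<subseteq> V" using assms by (auto simp: walk_def)
next
  fix i assume i: "Suc i < length (rev xs)"
  define j where "j = length xs - Suc (Suc i)"
  have "E (xs ! j) (xs ! Suc j)" using assms(1) i by (simp add: walk_def j_def)
  moreover have "rev xs ! i = xs ! Suc j" "rev xs ! Suc i = xs ! j"
    using i by (auto simp: rev_nth j_def Suc_diff_Suc)
  ultimately show "E (rev xs ! i) (rev xs ! Suc i)" using assms(2) by simp
qed

lemma walk_potential_le:
  assumes "walk V E xs" "\<And>w y. E w y \<Longrightarrow> D y \<le> D w + 1"
  shows "D (last xs) \<le> D (hd xs) + (length xs - 1)"
proof -
  have "D (xs ! k) \<le> D (xs ! 0) + k" if "k < length xs" for k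
    using that
  proof (induction k)
    case (Suc k)
    then have "E (xs ! k) (xs ! Suc k)" using assms(1) by (simp add: walk_def)
    then show ?case using Suc assms(2) by fastforce
  qed simp
  moreover have "xs \<noteq> []" using assms(1) by (simp add: walk_def)
  ultimately show ?thesis by (simp add: hd_conv_nth last_conv_nth)
qed

lemma gdist_eq_potential:
  assumes lipschitz: "\<And>w y. E w y \<Longrightarrow> D y \<le> D w + 1" and "D u = 0"
    and xs: "walk V E xs" "hd xs = u" "last xs = v" "length xs = Suc (D v)"
  shows "gdist V E u v = enat (D v)"
proof -
  have "(LEAST n. \<exists>xs. walk V E xs \<and> hd xs = u \<and> last xs = v \<and> length xs = Suc n) = D v"
  proof (rule Least_equality)
    fix n assume "\<exists>ys. walk V E ys \<and> hd ys = u \<and> last ys = v \<and> length ys = Suc n"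
    then show "D v \<le> n" using walk_potential_le[OF _ lipschitz] \<open>D u = 0\<close> by fastforce
  qed (use xs in blast)
  then show ?thesis unfolding gdist_def using xs by auto
qed

lemma cycle_adj_next:
  assumes "is_cycle V E xs" "i < length xs"
  shows "E (xs ! i) (xs ! (Suc i mod length xs))"
proof (cases "Suc i < length xs")
  case True
  then show ?thesis using assms(1) by (simp add: is_cycle_def walk_def)
next
  case False
  then have "Suc i = length xs" using assms(2) by simp
  then have "i = length xs - 1" "Suc i mod length xs = 0" by auto
  then show ?thesis using assms(1)
    by (auto simp: is_cycle_def walk_def hd_conv_nth last_conv_nth)
qed

lemma cycle_two_neighbours:
  assumes cyc: "is_cycle V E xs" and sym: "\<And>x y. E x y \<Longrightarrow> E y x" and u: "u \<in> set xs"
  shows "\<exists>v\<in>set xs. \<exists>w\<in>set xs. v \<noteq> w \<and> E u v \<and> E u w"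
proof -
  let ?n = "length xs"
  obtain i where i: "i < ?n" "u = xs ! i" using u by (auto simp: in_set_conv_nth)
  define p where "p = (i + ?n - 1) mod ?n"
  define q where "q = Suc i mod ?n"
  have n: "3 \<le> ?n" using cyc by (simp add: is_cycle_def)
  then have "0 < ?n" by linarith
  then have pq: "p < ?n" "q < ?n" unfolding p_def q_def by simp_all
  have "Suc (i + ?n - 1) = i + ?n" using n by simp
  then have "Suc p mod ?n = i" using i unfolding p_def by (simp add: mod_Suc_eq)
  then have "E u (xs ! p)" using sym cycle_adj_next[OF cyc pq(1)] i by simp
  moreover have "E u (xs ! q)" using cycle_adj_next[OF cyc i(1)] i unfolding q_def by simp
  moreover have "(i + 2) mod ?n \<noteq> i" using i n by (cases "i + 2 < ?n") (auto simp: le_mod_geq)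
  then have "p \<noteq> q" using \<open>Suc p mod ?n = i\<close> unfolding q_def by (metis add_2_eq_Suc' mod_Suc_eq)
  then have "xs ! p \<noteq> xs ! q" using cyc pq by (simp add: is_cycle_def nth_eq_iff_index_eq)
  ultimately show ?thesis using pq by (meson nth_mem)
qed

lemma int_set_between_is_interval:
  fixes S :: "int set"
  assumes "{lo<..<hi} \<subseteq> S" "S \<subseteq> {lo..hi}"
  shows "\<exists>a b. S = {a..b}"
proof (intro exI set_eqI)
  fix x
  have "x \<in> S \<longleftrightarrow> lo \<le> x \<and> x \<le> hi \<and> (x = lo \<longrightarrow> lo \<in> S) \<and> (x = hi \<longrightarrow> hi \<in> S)"
    using assms by (cases "x = lo \<or> x = hi") (auto simp: subset_iff)
  then show "x \<in> S \<longleftrightarrow> x \<in> {(if lo \<in> S then lo else lo + 1)..(if hi \<in> S then hi else hi - 1)}"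
    by auto
qed

text \<open>A caterpillar drawn on the integer line: spine vertices (\<open>dep = 0\<close>) occupy the positions
  \<open>lo..hi\<close>, one each, and a leaf (\<open>dep = 1\<close>) hangs below the spine vertex at its position.\<close>

definition spine_adj :: "nat set \<Rightarrow> (nat \<Rightarrow> int) \<Rightarrow> (nat \<Rightarrow> nat) \<Rightarrow> nat \<Rightarrow> nat \<Rightarrow> bool" where
  "spine_adj V pos dep x y \<longleftrightarrow> x \<in> V \<and> y \<in> V \<and> x \<noteq> y \<and>
     (dep x = 0 \<and> dep y = 0 \<and> \<bar>pos x - pos y\<bar> = 1 \<or>
      dep x = 0 \<and> dep y = 1 \<and> pos x = pos y \<or>
      dep x = 1 \<and> dep y = 0 \<and> pos x = pos y)"

definition spine_dist :: "(nat \<Rightarrow> int) \<Rightarrow> (nat \<Rightarrow> nat) \<Rightarrow> nat \<Rightarrow> nat \<Rightarrow> nat" where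
  "spine_dist pos dep x y = (if x = y then 0 else nat \<bar>pos x - pos y\<bar> + dep x + dep y)"

lemma spine_dist_commute: "spine_dist pos dep x y = spine_dist pos dep y x"
  unfolding spine_dist_def by (simp add: abs_minus_commute)

locale spine_caterpillar =
  fixes V :: "nat set" and pos :: "nat \<Rightarrow> int" and dep :: "nat \<Rightarrow> nat" and lo hi :: int
  assumes finite_V: "finite V"
    and lo_le_hi: "lo \<le> hi"
    and vertex_bounds: "\<And>x. x \<in> V \<Longrightarrow> dep x \<le> 1 \<and> lo \<le> pos x \<and> pos x \<le> hi"
    and spine_exists: "\<And>a. lo \<le> a \<Longrightarrow> a \<le> hi \<Longrightarrow> \<exists>x\<in>V. dep x = 0 \<and> pos x = a"
    and spine_unique: "\<And>x y. \<lbrakk>x \<in> V; y \<in> V; dep x = 0; dep y = 0; pos x = pos y\<rbrakk> \<Longrightarrow> x = y"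
begin

abbreviation "E \<equiv> spine_adj V pos dep"

definition spine_at :: "int \<Rightarrow> nat" where
  "spine_at a = (SOME x. x \<in> V \<and> dep x = 0 \<and> pos x = a)"

lemma spine_at: "lo \<le> a \<Longrightarrow> a \<le> hi \<Longrightarrow> spine_at a \<in> V \<and> dep (spine_at a) = 0 \<and> pos (spine_at a) = a"
  unfolding spine_at_def using spine_exists by (metis (mono_tags, lifting) someI_ex)

lemma spine_at_pos: "x \<in> V \<Longrightarrow> dep x = 0 \<Longrightarrow> spine_at (pos x) = x"
  using spine_at[of "pos x"] vertex_bounds[of x] spine_unique by metis

lemma adj_sym: "E x y \<Longrightarrow> E y x"
  unfolding spine_adj_def by auto

lemma simple_graph: "simple_graph V E"
  unfolding simple_graph_def using finite_V by (auto simp: spine_adj_def)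

lemma adj_spine_at_iff:
  "\<lbrakk>lo \<le> a; a \<le> hi; lo \<le> b; b \<le> hi\<rbrakk> \<Longrightarrow> E (spine_at a) (spine_at b) \<longleftrightarrow> \<bar>a - b\<bar> = 1"
  using spine_at[of a] spine_at[of b] unfolding spine_adj_def
  by (metis abs_zero diff_self zero_neq_one)

lemma leaf_adj_iff: "x \<in> V \<Longrightarrow> dep x = 1 \<Longrightarrow> E x w \<longleftrightarrow> w = spine_at (pos x)"
  using spine_at[of "pos x"] vertex_bounds[of x] spine_at_pos[of w]
  unfolding spine_adj_def by auto

lemma walk_spine_upto:
  assumes "lo \<le> a" "a \<le> b" "b \<le> hi"
  shows "walk V E (map spine_at [a..b])"
  unfolding walk_def
proof (intro conjI allI impI)
  fix i assume "Suc i < length (map spine_at [a..b])"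
  then have "a + int i + 1 \<le> b" by simp
  then show "E (map spine_at [a..b] ! i) (map spine_at [a..b] ! Suc i)"
    using assms adj_spine_at_iff[of "a + int i" "a + int i + 1"] by (simp add: ac_simps)
next
  show "set (map spine_at [a..b]) \<subseteq> V" using assms spine_at by auto
qed (use assms in simp)

lemma walk_along_spine:
  assumes "lo \<le> a" "a \<le> hi" "lo \<le> b" "b \<le> hi"
  shows "\<exists>xs. walk V E xs \<and> hd xs = spine_at a \<and> last xs = spine_at b \<and>
    length xs = Suc (nat \<bar>a - b\<bar>)"
proof (cases "a \<le> b")
  case True
  have "hd [a..b] = a" using True by (simp add: upto_rec1)
  moreover have "last [a..b] = b" using True by (simp add: upto_rec2)
  ultimately show ?thesis using walk_spine_upto[of a b] assms True
    by (intro exI[of _ "map spine_at [a..b]"]) (simp add: hd_map last_map)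
next
  case False
  have "hd [b..a] = b" using False by (simp add: upto_rec1)
  moreover have "last [b..a] = a" using False by (simp add: upto_rec2)
  ultimately show ?thesis using walk_rev[OF walk_spine_upto[of b a] adj_sym] assms False
    by (intro exI[of _ "rev (map spine_at [b..a])"]) (simp add: hd_rev last_rev hd_map last_map)
qed

lemma walk_to_spine:
  assumes x: "x \<in> V" and "lo \<le> b" "b \<le> hi"
  shows "\<exists>xs. walk V E xs \<and> hd xs = x \<and> last xs = spine_at b \<and>
    length xs = Suc (nat \<bar>pos x - b\<bar> + dep x)"
proof -
  obtain S where S: "walk V E S" "hd S = spine_at (pos x)" "last S = spine_at b"
    "length S = Suc (nat \<bar>pos x - b\<bar>)"
    using walk_along_spine[of "pos x" b] vertex_bounds[OF x] assms by blast
  consider "dep x = 0" | "dep x = 1" using vertex_bounds[OF x] by linarith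
  then show ?thesis
  proof cases
    case 1
    then show ?thesis using S spine_at_pos[OF x] by auto
  next
    case 2
    then have "walk V E ([x] @ S)"
      using S leaf_adj_iff[OF x] by (intro walk_append walk_singleton x) auto
    moreover have "S \<noteq> []" using S(1) by (simp add: walk_def)
    ultimately show ?thesis using S 2 by (intro exI[of _ "x # S"]) auto
  qed
qed

lemma walk_spine_dist:
  assumes x: "x \<in> V" and y: "y \<in> V" and "x \<noteq> y"
  shows "\<exists>xs. walk V E xs \<and> hd xs = x \<and> last xs = y \<and> length xs = Suc (spine_dist pos dep x y)"
proof -
  obtain L where L: "walk V E L" "hd L = x" "last L = spine_at (pos y)"
    "length L = Suc (nat \<bar>pos x - pos y\<bar> + dep x)"
    using walk_to_spine[OF x] vertex_bounds[OF y] by blast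
  consider "dep y = 0" | "dep y = 1" using vertex_bounds[OF y] by linarith
  then show ?thesis
  proof cases
    case 1
    then show ?thesis using L spine_at_pos[OF y] \<open>x \<noteq> y\<close> by (auto simp: spine_dist_def)
  next
    case 2
    then have "walk V E (L @ [y])"
      using L leaf_adj_iff[OF y] adj_sym by (intro walk_append walk_singleton y) auto
    moreover have "L \<noteq> []" using L(1) by (simp add: walk_def)
    ultimately show ?thesis using L 2 \<open>x \<noteq> y\<close>
      by (intro exI[of _ "L @ [y]"]) (auto simp: spine_dist_def)
  qed
qed

lemma gdist_eq_spine_dist:
  assumes "x \<in> V" "y \<in> V" "x \<noteq> y"
  shows "gdist V E x y = enat (spine_dist pos dep x y)"
proof -
  obtain xs where xs: "walk V E xs" "hd xs = x" "last xs = y"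
    "length xs = Suc (spine_dist pos dep x y)"
    using walk_spine_dist[OF assms] by blast
  show ?thesis
  proof (rule gdist_eq_potential[where D = "spine_dist pos dep x", OF _ _ xs])
    show "spine_dist pos dep x z \<le> spine_dist pos dep x w + 1" if "E w z" for w z
      using that unfolding spine_dist_def spine_adj_def by (auto split: if_splits)
  qed (simp add: spine_dist_def)
qed

lemma connected_graph: "connected_graph V E"
  unfolding connected_graph_def
proof (intro conjI ballI)
  show "V \<noteq> {}" using spine_at[of lo] lo_le_hi by auto
next
  fix u v assume "u \<in> V" "v \<in> V"
  then show "\<exists>xs. walk V E xs \<and> hd xs = u \<and> last xs = v"
    using walk_spine_dist[of u v] walk_singleton[of u V E] by (cases "u = v") auto
qed

text \<open>A leaf has only one neighbour, so a cycle runs on the spine; there its vertex of largest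
  position would need two distinct neighbours, both at the position one below.\<close>

lemma no_cycle: "\<not> is_cycle V E xs"
proof
  assume cyc: "is_cycle V E xs"
  have inV: "set xs \<subseteq> V" and "xs \<noteq> []" using cyc unfolding is_cycle_def walk_def by auto
  have two_nbrs: "\<exists>v\<in>set xs. \<exists>w\<in>set xs. v \<noteq> w \<and> E u v \<and> E u w" if "u \<in> set xs" for u
    using cyc adj_sym that by (rule cycle_two_neighbours)
  have on_spine: "dep u = 0" if u: "u \<in> set xs" for u
  proof (rule ccontr)
    assume "dep u \<noteq> 0"
    moreover have uV: "u \<in> V" using inV u by blast
    ultimately have leaf: "dep u = 1" using vertex_bounds[of u] by linarith
    obtain v w where "v \<noteq> w" "E u v" "E u w" using two_nbrs[OF u] by blast
    then show False using leaf_adj_iff[OF uV leaf] by simp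
  qed
  define m where "m = Max (pos ` set xs)"
  have "m \<in> pos ` set xs" unfolding m_def using \<open>xs \<noteq> []\<close> by (intro Max_in) auto
  then obtain u where u: "u \<in> set xs" "pos u = m" by blast
  have below: "pos v = m - 1" if "v \<in> set xs" "E u v" for v
  proof -
    have "pos v \<le> m" unfolding m_def using that(1) by simp
    moreover have "\<bar>pos u - pos v\<bar> = 1"
      using that(2) on_spine[OF u(1)] on_spine[OF that(1)] by (simp add: spine_adj_def)
    ultimately show ?thesis using u(2) by linarith
  qed
  obtain v w where vw: "v \<in> set xs" "w \<in> set xs" "v \<noteq> w" "E u v" "E u w"
    using two_nbrs[OF u(1)] by blast
  then have "pos v = pos w" "v \<in> V" "w \<in> V" using below inV by auto
  then show False using spine_unique on_spine vw(1-3) by blast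
qed

lemma is_tree: "is_tree V E"
  unfolding is_tree_def using simple_graph connected_graph no_cycle by blast

lemma degree_leaf:
  assumes "x \<in> V" "dep x = 1"
  shows "degree E x = 1"
proof -
  have "{w. E x w} = {spine_at (pos x)}" using leaf_adj_iff[OF assms] by auto
  then show ?thesis by (simp add: degree_def)
qed

lemma degree_inner_spine:
  assumes "lo < a" "a < hi"
  shows "2 \<le> degree E (spine_at a)"
proof -
  have "{spine_at (a - 1), spine_at (a + 1)} \<subseteq> {w. E (spine_at a) w}"
    using assms adj_spine_at_iff by auto
  moreover have "finite {w. E (spine_at a) w}"
    using finite_V by (rule rev_finite_subset) (auto simp: spine_adj_def)
  moreover have "spine_at (a - 1) \<noteq> spine_at (a + 1)"
    using assms spine_at[of "a - 1"] spine_at[of "a + 1"] by auto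
  ultimately show ?thesis unfolding degree_def by (metis card_2_iff card_mono)
qed

lemma caterpillar: "caterpillar V E"
  unfolding caterpillar_def
proof (intro conjI is_tree)
  define S where "S = {a. lo \<le> a \<and> a \<le> hi \<and> degree E (spine_at a) \<noteq> 1}"
  have nonleaves: "{v \<in> V. degree E v \<noteq> 1} = spine_at ` S"
  proof (intro equalityI subsetI)
    fix v assume v: "v \<in> {v \<in> V. degree E v \<noteq> 1}"
    then have "dep v = 0" using degree_leaf vertex_bounds[of v] by force
    then show "v \<in> spine_at ` S"
      using v vertex_bounds[of v] spine_at_pos unfolding S_def
      by (auto intro!: image_eqI[of _ _ "pos v"])
  qed (use spine_at in \<open>auto simp: S_def\<close>)
  have "{lo<..<hi} \<subseteq> S" "S \<subseteq> {lo..hi}"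
    using degree_inner_spine unfolding S_def by force+
  then obtain a b where S: "S = {a..b}" using int_set_between_is_interval by blast
  then have ab: "lo \<le> a" "b \<le> hi" if "a \<le> b" using that \<open>S \<subseteq> {lo..hi}\<close> by auto
  show "induces_path E {v \<in> V. degree E v \<noteq> 1}"
    unfolding induces_path_def nonleaves S
  proof (intro exI[of _ "map spine_at [a..b]"] conjI allI impI)
    have "inj_on spine_at {a..b}"
      by (rule inj_onI) (metis ab atLeastAtMost_iff order_trans spine_at)
    then show "distinct (map spine_at [a..b])" by (simp add: distinct_map)
  next
    fix i j assume ij: "i < length (map spine_at [a..b])" "j < length (map spine_at [a..b])"
    then have "map spine_at [a..b] ! i = spine_at (a + int i)"
      "map spine_at [a..b] ! j = spine_at (a + int j)"
      by auto
    moreover have "E (spine_at (a + int i)) (spine_at (a + int j)) \<longleftrightarrow> \<bar>int i - int j\<bar> = 1"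
    proof -
      have "a + int i \<le> b" "a + int j \<le> b" using ij by auto
      then show ?thesis using ab by (subst adj_spine_at_iff) auto
    qed
    ultimately show
      "E (map spine_at [a..b] ! i) (map spine_at [a..b] ! j) \<longleftrightarrow> (i = Suc j \<or> j = Suc i)"
      by auto
  qed simp
qed

end

lemma int_unit_steps_attain:
  fixes f :: "nat \<Rightarrow> int"
  assumes steps: "\<And>i. i < n \<Longrightarrow> f i \<le> f (Suc i) \<and> f (Suc i) \<le> f i + 1"
    and "f 0 \<le> c" "c < f n"
  shows "\<exists>i<n. f i = c \<and> f (Suc i) = f i + 1"
  using assms(2,3) steps
proof (induction n)
  case (Suc n)
  show ?case
  proof (cases "c < f n")
    case True
    then show ?thesis using Suc by (meson less_SucI)
  next
    case False
    then show ?thesis using Suc.prems by (intro exI[of _ n]) force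
  qed
qed simp

lemma proper_distance_labeling_if_fibres_pairs:
  assumes "distance_labeling V E J f" "\<forall>k\<in>J. card {v\<in>V. f v = k} = 2"
  shows "proper_distance_labeling V E J f"
  unfolding proper_distance_labeling_def
proof (intro conjI assms(1) ballI)
  fix k assume "k \<in> J - {0}"
  then obtain u v where "{v\<in>V. f v = k} = {u, v}" "u \<noteq> v"
    using assms(2) by (meson DiffD1 card_2_iff)
  then show "\<exists>u\<in>V. \<exists>v\<in>V. u \<noteq> v \<and> f u = k \<and> f v = k" by blast
qed

locale gap_sequence =
  fixes t :: "nat \<Rightarrow> nat" and l :: nat
  assumes l_pos: "0 < l" and t_0: "t 0 = 1"
    and t_step: "\<And>i. Suc i < l \<Longrightarrow> t i < t (Suc i) \<and> t (Suc i) \<le> t i + 2"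
begin

definition excess :: "nat \<Rightarrow> int" where
  "excess i = int (t i) - int i - 1"

definition double_step :: "nat \<Rightarrow> bool" where
  "double_step i \<longleftrightarrow> Suc i < l \<and> t (Suc i) = t i + 2"

lemma excess_Suc: "Suc i < l \<Longrightarrow> excess (Suc i) = excess i + (if double_step i then 1 else 0)"
  using t_step[of i] unfolding excess_def double_step_def by auto

lemma excess_mono: "i \<le> j \<Longrightarrow> j < l \<Longrightarrow> excess i \<le> excess j"
  by (rule lift_Suc_mono_le_ivl[where N = "{i. Suc i < l}"]) (auto simp: excess_Suc)

lemma excess_nonneg: "i < l \<Longrightarrow> 0 \<le> excess i"
  using excess_mono[of 0 i] t_0 by (simp add: excess_def)

lemma t_strict_mono: "i < j \<Longrightarrow> j < l \<Longrightarrow> t i < t j"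
  using excess_mono[of i j] unfolding excess_def by linarith

lemma t_inj_on: "inj_on t {..<l}"
  by (rule inj_onI) (metis lessThan_iff linorder_neqE_nat t_strict_mono less_irrefl)

lemma excess_double_step_less: "double_step i \<Longrightarrow> i < j \<Longrightarrow> j < l \<Longrightarrow> excess i < excess j"
  using excess_Suc[of i] excess_mono[of "Suc i" j] unfolding double_step_def by simp

lemma excess_attained_at_double_step:
  assumes "0 \<le> c" "c < excess (l - 1)"
  shows "\<exists>i. double_step i \<and> excess i = c"
proof -
  have "excess 0 = 0" using t_0 by (simp add: excess_def)
  then obtain i where "i < l - 1" "excess i = c" "excess (Suc i) = excess i + 1"
    using int_unit_steps_attain[of "l - 1" excess c] assms excess_Suc by force
  then show ?thesis using excess_Suc[of i] by (intro exI[of _ i]) (auto split: if_splits)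
qed

definition position :: "nat \<Rightarrow> int" where
  "position v =
     (if v < l then int v else - excess (v - l) - (if double_step (v - l) then 1 else 0))"

definition depth :: "nat \<Rightarrow> nat" where
  "depth v = (if v < l \<or> double_step (v - l) then 0 else 1)"

definition label :: "nat \<Rightarrow> nat" where
  "label v = t (v mod l)"

abbreviation "V \<equiv> {..<2 * l}"

lemma spine_caterpillar: "spine_caterpillar V position depth (- excess (l - 1)) (int l - 1)"
proof
  show "finite V" by simp
  show "- excess (l - 1) \<le> int l - 1" using excess_nonneg[of "l - 1"] l_pos by simp
next
  fix v assume v: "v \<in> V"
  show "depth v \<le> 1 \<and> - excess (l - 1) \<le> position v \<and> position v \<le> int l - 1"
  proof (cases "v < l")
    case True
    then show ?thesis using excess_nonneg[of "l - 1"] l_pos by (simp add: depth_def position_def)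
  next
    case False
    then have i: "v - l < l" using v by simp
    have "excess (v - l) + (if double_step (v - l) then 1 else 0) \<le> excess (l - 1)"
      using excess_Suc[of "v - l"] excess_mono[of "Suc (v - l)" "l - 1"]
        excess_mono[of "v - l" "l - 1"] i
      by (auto simp: double_step_def)
    then show ?thesis using False excess_nonneg[OF i] l_pos by (auto simp: depth_def position_def)
  qed
next
  fix a assume a: "- excess (l - 1) \<le> a" "a \<le> int l - 1"
  show "\<exists>v\<in>V. depth v = 0 \<and> position v = a"
  proof (cases "0 \<le> a")
    case True
    then show ?thesis using a by (intro bexI[of _ "nat a"]) (auto simp: depth_def position_def)
  next
    case False
    then obtain i where i: "double_step i" "excess i = - a - 1"
      using excess_attained_at_double_step[of "- a - 1"] a by auto
    then have "i < l" by (simp add: double_step_def)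
    then show ?thesis using i by (intro bexI[of _ "l + i"]) (auto simp: depth_def position_def)
  qed
next
  fix x y assume xy: "x \<in> V" "y \<in> V" "depth x = 0" "depth y = 0" "position x = position y"
  have twin: "double_step (v - l) \<and> position v < 0" if "v \<in> V" "\<not> v < l" "depth v = 0" for v
  proof -
    have "v - l < l" using that(1) by simp
    then show ?thesis
      using that excess_nonneg[of "v - l"] by (auto simp: depth_def position_def split: if_splits)
  qed
  have first: "0 \<le> position v" if "v < l" for v using that by (simp add: position_def)
  consider "x < l" "y < l" | "\<not> x < l" "\<not> y < l" | "x < l" "\<not> y < l" | "\<not> x < l" "y < l"
    by blast
  then show "x = y"
  proof cases
    case 1
    then show ?thesis using xy(5) by (simp add: position_def)
  next
    case 2
    then have "double_step (x - l)" "double_step (y - l)" "excess (x - l) = excess (y - l)"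
      using twin xy by (auto simp: position_def)
    moreover have "x - l < l" "y - l < l" using xy(1,2) by auto
    ultimately have "x - l = y - l"
      using excess_double_step_less by (metis less_irrefl linorder_neqE_nat)
    then show ?thesis using 2 by simp
  next
    case 3
    then show ?thesis using first[of x] twin[OF xy(2) _ xy(4)] xy(5) by simp
  next
    case 4
    then show ?thesis using first[of y] twin[OF xy(1) _ xy(3)] xy(5) by simp
  qed
qed

sublocale caterpillar: spine_caterpillar V position depth "- excess (l - 1)" "int l - 1"
  by (rule spine_caterpillar)

lemma spine_dist_twins: "i < l \<Longrightarrow> spine_dist position depth i (l + i) = t i"
  using excess_nonneg[of i] unfolding spine_dist_def position_def depth_def excess_def by auto

lemma mod_eq_iff_twin:
  assumes "v < 2 * l"
  shows "v mod l = i \<longleftrightarrow> v = i \<and> i < l \<or> v = l + i"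
proof (cases "v < l")
  case False
  then have "v mod l = v - l" using assms by (simp add: le_mod_geq)
  then show ?thesis using False by auto
qed auto

lemma label_fibre:
  assumes "i < l"
  shows "{v \<in> V. label v = t i} = {i, l + i}"
proof -
  have "label v = t i \<longleftrightarrow> v mod l = i" for v
    using inj_onD[OF t_inj_on, of "v mod l" i] assms l_pos by (auto simp: label_def)
  then show ?thesis using mod_eq_iff_twin assms by auto
qed

lemma distance_labeling: "distance_labeling V caterpillar.E (t ` {..<l}) label"
  unfolding distance_labeling_def
proof (intro conjI ballI impI)
  show "label ` V = t ` {..<l}"
  proof
    show "label ` V \<subseteq> t ` {..<l}" using l_pos by (auto simp: label_def)
    show "t ` {..<l} \<subseteq> label ` V"
    proof (rule image_subsetI)
      fix i assume "i \<in> {..<l}"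
      then have "label i = t i" "i \<in> V" by (auto simp: label_def)
      then show "t i \<in> label ` V" by (metis rev_image_eqI)
    qed
  qed
next
  fix u v assume u: "u \<in> V" and v: "v \<in> V" and uv: "u \<noteq> v \<and> label u = label v"
  define i where "i = u mod l"
  have i: "i < l" "label u = t i" using l_pos by (simp_all add: i_def label_def)
  then have "u \<in> {v \<in> V. label v = t i}" "v \<in> {v \<in> V. label v = t i}" using u v uv by simp_all
  then have "u \<in> {i, l + i}" "v \<in> {i, l + i}" unfolding label_fibre[OF i(1)] .
  then consider "u = i" "v = l + i" | "u = l + i" "v = i" using uv by blast
  then have "spine_dist position depth u v = t i"
    by cases (simp_all add: spine_dist_twins[OF i(1)] spine_dist_commute[of _ _ "l + i"])
  then show "gdist V caterpillar.E u v = enat (label u)"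
    using caterpillar.gdist_eq_spine_dist[OF u v] uv i(2) by simp
qed

lemma card_label_fibre: "k \<in> t ` {..<l} \<Longrightarrow> card {v \<in> V. label v = k} = 2"
  using label_fibre by auto

end

theorem mainTheorem8:
  fixes s :: "nat \<Rightarrow> nat" and l :: nat
  assumes "l \<ge> 1"
    and "\<forall>i\<in>{2..l}. s (i - 1) < s i"
    and "s 1 = 1"
    and "\<forall>i\<in>{2..l}. s i - s (i - 1) \<le> 2"
  shows "delta_set (s ` {1..l}) \<and>
    (\<exists>(V::nat set) E f. caterpillar V E \<and> card V = 2 * l \<and>
        distance_labeling V E (s ` {1..l}) f \<and>
        (\<forall>k\<in>s ` {1..l}. card {v\<in>V. f v = k} = 2))"
proof -
  interpret gap_sequence "\<lambda>i. s (Suc i)" l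
  proof
    fix i assume "Suc i < l"
    then show "s (Suc i) < s (Suc (Suc i)) \<and> s (Suc (Suc i)) \<le> s (Suc i) + 2"
      using assms(2,4) by (auto dest!: bspec[of _ _ "Suc (Suc i)"])
  qed (use assms(1,3) in simp_all)
  have labels: "s ` {1..l} = (\<lambda>i. s (Suc i)) ` {..<l}"
    using image_Suc_lessThan[of l] by (metis image_image)
  have labelling: "distance_labeling V caterpillar.E (s ` {1..l}) label"
    using distance_labeling unfolding labels .
  have fibres: "\<forall>k\<in>s ` {1..l}. card {v \<in> V. label v = k} = 2"
    unfolding labels using card_label_fibre by blast
  have "proper_distance_labeling V caterpillar.E (s ` {1..l}) label"
    using proper_distance_labeling_if_fibres_pairs[OF labelling fibres] .
  moreover have "finite (s ` {1..l})" "card V = 2 * l" by simp_all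
  ultimately show ?thesis
    unfolding delta_set_def
    using caterpillar.simple_graph caterpillar.caterpillar labelling fibres by blast
qed

end
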